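(* Let $D$ be a centrally finite division algebra with center $F$, and let $R=D[t_1,\ldots,t_n]$ be the ring of polynomials in $n$ central commuting variables over $D$. For any polynomial $p\in R$, there exist $p_1,\ldots,p_m\in F[t_1,\ldots,t_n]$ such that $D[p]=D[p_1,\ldots,p_m]$ inside $R$.
   Context: A division algebra is centrally finite if it is finite-dimensional over its center. For a subset $X\subseteq R$, $D[X]$ denotes the subring of $R$ generated by $D\cup X$. *)

theory Defs
  imports "HOL-Library.Poly_Mapping"
begin

definition center :: "'a::ring_1 set" where
  "center = {z. \<forall>x. z * x = x * z}"

definition centrally_finite :: "'a::division_ring itself \<Rightarrow> bool" where
  "centrally_finite _ \<longleftrightarrow>
     (\<exists>B::'a set. finite B \<and>
        (\<forall>x::'a. \<exists>c. (\<forall>b\<in>B. c b \<in> center) \<and> x = (\<Sum>b\<in>B. c b * b)))"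

text \<open>Polynomials with coefficients in 'd in commuting central variables
  t_0, t_1, ...; a monomial is a finitely supported exponent vector.\<close>
type_synonym 'd mpoly = "(nat \<Rightarrow>\<^sub>0 nat) \<Rightarrow>\<^sub>0 'd"

definition const_poly :: "'d::zero \<Rightarrow> 'd mpoly" where
  "const_poly d = Poly_Mapping.single 0 d"

definition poly_ring :: "nat \<Rightarrow> ('d::zero) mpoly set" where
  "poly_ring n = {p. \<forall>m\<in>Poly_Mapping.keys p. Poly_Mapping.keys m \<subseteq> {..<n}}"

definition center_coeffs :: "('d::ring_1) mpoly \<Rightarrow> bool" where
  "center_coeffs p \<longleftrightarrow> (\<forall>m. Poly_Mapping.lookup p m \<in> center)"

inductive_set adjoin :: "('d::ring_1) mpoly set \<Rightarrow> 'd mpoly set" for X where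
  const: "const_poly d \<in> adjoin X"
| gen: "x \<in> X \<Longrightarrow> x \<in> adjoin X"
| add: "a \<in> adjoin X \<Longrightarrow> b \<in> adjoin X \<Longrightarrow> a + b \<in> adjoin X"
| neg: "a \<in> adjoin X \<Longrightarrow> - a \<in> adjoin X"
| mult: "a \<in> adjoin X \<Longrightarrow> b \<in> adjoin X \<Longrightarrow> a * b \<in> adjoin X"

end

theory Submission
  imports Defs
begin

(*
  D[p] is closed under left and right multiplication by constants, and every q in such a
  D-bimodule A is a left D-linear combination of polynomials in A with central coefficients and
  support inside that of q. By induction on the size of the support: scale q on the right so that
  one coefficient becomes 1. If some coefficient a is not central, pick x with a x ~= x a; the
  commutator s = x q - q x lies in A and loses the monomial with coefficient 1, and q - s e with
  e = (x a - a x)^-1 a lies in A and loses the monomial of a, so q = (q - s e) + s e is covered by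
  the induction hypothesis. For q = p the finitely many polynomials used generate D[p] together
  with D.
*)

lemma lookup_const_poly_mult [simp]:
  "Poly_Mapping.lookup (const_poly x * q) m = (x::'d::ring_1) * Poly_Mapping.lookup q m"
  unfolding const_poly_def mult_map_scale_conv_mult[symmetric]
  by (simp add: Poly_Mapping.map.rep_eq when_def)

lemma lookup_mult_const_poly [simp]:
  "Poly_Mapping.lookup (q * const_poly x) m = Poly_Mapping.lookup q m * (x::'d::ring_1)"
proof -
  have "(\<lambda>k. Poly_Mapping.lookup (const_poly x) k when m = l + k) = (\<lambda>k. (x when m = l) when 0 = k)"
    for l
    by (auto simp: const_poly_def lookup_single when_def)
  then show ?thesis
    by (simp only: lookup_mult Sum_any_when_equal' add_0_right mult_when)
qed

lemma center_coeffs_commute_const_poly: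
  "center_coeffs g \<Longrightarrow> g * const_poly e = const_poly (e::'d::ring_1) * g"
  by (rule poly_mapping_eqI) (simp add: center_coeffs_def center_def)

lemma right_normalize_coeff:
  fixes q :: "'d::division_ring mpoly"
  assumes "m \<in> Poly_Mapping.keys q"
  defines "c \<equiv> Poly_Mapping.lookup q m"
  shows "q = q * const_poly (inverse c) * const_poly c"
    and "Poly_Mapping.keys (q * const_poly (inverse c)) = Poly_Mapping.keys q"
    and "Poly_Mapping.lookup (q * const_poly (inverse c)) m = 1"
proof -
  have "c \<noteq> 0"
    using assms by (simp add: in_keys_iff)
  then show "q = q * const_poly (inverse c) * const_poly c"
    by (intro poly_mapping_eqI) (simp, simp add: mult.assoc)
  show "Poly_Mapping.keys (q * const_poly (inverse c)) = Poly_Mapping.keys q"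
    and "Poly_Mapping.lookup (q * const_poly (inverse c)) m = 1"
    using \<open>c \<noteq> 0\<close> by (auto simp: c_def in_keys_iff)
qed

lemma keys_commutator_const_poly:
  "Poly_Mapping.keys (const_poly x * q - q * const_poly x)
     \<subseteq> {m \<in> Poly_Mapping.keys q.
          x * Poly_Mapping.lookup q m \<noteq> Poly_Mapping.lookup q m * (x::'d::ring_1)}"
  by (auto simp: in_keys_iff lookup_minus)

lemma keys_eliminate_by_commutator:
  fixes q :: "'d::division_ring mpoly"
  assumes "Poly_Mapping.lookup q m = a" and "a * x \<noteq> x * a"
  shows "Poly_Mapping.keys
           (q - (const_poly x * q - q * const_poly x) * const_poly (inverse (x * a - a * x) * a))
         \<subseteq> Poly_Mapping.keys q - {m}"
proof -
  have "(x * a - a * x) * (inverse (x * a - a * x) * a) = a"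
    using not_sym[OF assms(2)] by (simp flip: mult.assoc)
  then show ?thesis
    using assms(1) by (auto simp: in_keys_iff lookup_minus)
qed

lemma keys_commutator_reduction:
  fixes q :: "'d::division_ring mpoly"
  assumes "Poly_Mapping.lookup q m0 = 1"
    and "Poly_Mapping.lookup q m1 * x \<noteq> x * Poly_Mapping.lookup q m1"
  defines "s \<equiv> const_poly x * q - q * const_poly x"
  shows "\<exists>e. Poly_Mapping.keys s \<subset> Poly_Mapping.keys q
           \<and> Poly_Mapping.keys (q - s * const_poly e) \<subset> Poly_Mapping.keys q"
proof -
  have "m0 \<in> Poly_Mapping.keys q" and "m1 \<in> Poly_Mapping.keys q"
    using assms(1,2) by (auto simp: in_keys_iff)
  moreover have "Poly_Mapping.keys s \<subseteq> Poly_Mapping.keys q - {m0}"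
    using keys_commutator_const_poly[of x q] assms(1) by (auto simp: s_def)
  moreover have "Poly_Mapping.keys (q - s * const_poly e) \<subseteq> Poly_Mapping.keys q - {m1}"
    if "e = inverse (x * a - a * x) * a" "a = Poly_Mapping.lookup q m1" for a e
    using keys_eliminate_by_commutator[of q m1 a x] assms(2) that by (simp add: s_def)
  ultimately show ?thesis
    by blast
qed

definition left_span :: "'d::ring_1 mpoly set \<Rightarrow> 'd mpoly set" where
  "left_span G = {(\<Sum>(d, g)\<leftarrow>L. const_poly d * g) | L. snd ` set L \<subseteq> G}"

lemma zero_in_left_span: "0 \<in> left_span G"
  unfolding left_span_def by (auto intro: exI[of _ "[]"])

lemma left_span_add:
  assumes "a \<in> left_span G" and "b \<in> left_span G"
  shows "a + b \<in> left_span G"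
proof -
  obtain L M where "snd ` set L \<subseteq> G" "a = (\<Sum>(d, g)\<leftarrow>L. const_poly d * g)"
    and "snd ` set M \<subseteq> G" "b = (\<Sum>(d, g)\<leftarrow>M. const_poly d * g)"
    using assms unfolding left_span_def by blast
  then have "snd ` set (L @ M) \<subseteq> G" "a + b = (\<Sum>(d, g)\<leftarrow>L @ M. const_poly d * g)"
    by auto
  then show ?thesis
    unfolding left_span_def by blast
qed

lemma left_span_base: "g \<in> G \<Longrightarrow> g \<in> left_span G"
  unfolding left_span_def by (intro CollectI exI[of _ "[(1, g)]"]) (simp add: const_poly_def)

lemma left_span_mono: "G \<subseteq> H \<Longrightarrow> left_span G \<subseteq> left_span H"
  unfolding left_span_def by blast

lemma left_span_mult_const_poly:
  assumes "\<forall>g\<in>G. center_coeffs g" and "a \<in> left_span G"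
  shows "a * const_poly (e::'d::ring_1) \<in> left_span G"
proof -
  obtain L where L: "snd ` set L \<subseteq> G" and a: "a = (\<Sum>(d, g)\<leftarrow>L. const_poly d * g)"
    using assms(2) unfolding left_span_def by blast
  have "a * const_poly e = (\<Sum>(d, g)\<leftarrow>map (\<lambda>(d, g). (d * e, g)) L. const_poly d * g)"
    using L unfolding a
  proof (induction L)
    case (Cons dg L)
    obtain d g where [simp]: "dg = (d, g)"
      by fastforce
    have "const_poly d * g * const_poly e = const_poly d * const_poly e * g"
      using Cons.prems assms(1) by (simp add: mult.assoc center_coeffs_commute_const_poly)
    then show ?case
      using Cons by (simp add: distrib_right const_poly_def mult_single)
  qed simp
  moreover have "snd ` set (map (\<lambda>(d, g). (d * e, g)) L) \<subseteq> G"
    using L by auto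
  ultimately show ?thesis
    unfolding left_span_def by blast
qed

lemma adjoin_zero: "0 \<in> adjoin X"
  using adjoin.const[of 0 X] by (simp add: const_poly_def)

lemma adjoin_diff: "a \<in> adjoin X \<Longrightarrow> b \<in> adjoin X \<Longrightarrow> a - b \<in> adjoin X"
  using adjoin.add[OF _ adjoin.neg] by (metis diff_conv_add_uminus)

lemma adjoin_least: "X \<subseteq> adjoin Y \<Longrightarrow> adjoin X \<subseteq> adjoin Y"
proof
  fix a assume "X \<subseteq> adjoin Y" "a \<in> adjoin X"
  from this(2,1) show "a \<in> adjoin Y"
    by (induction a rule: adjoin.induct) (auto intro: adjoin.intros)
qed

lemma left_span_subset_adjoin: "left_span G \<subseteq> adjoin G"
proof
  fix a assume "a \<in> left_span G"
  then obtain L where "snd ` set L \<subseteq> G" and "a = (\<Sum>(d, g)\<leftarrow>L. const_poly d * g)"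
    unfolding left_span_def by blast
  then show "a \<in> adjoin G"
    by (induction L arbitrary: a)
      (auto intro!: adjoin.add adjoin.mult[OF adjoin.const] intro: adjoin.gen adjoin_zero)
qed

lemma left_span_center_coeffs:
  fixes A :: "'d::division_ring mpoly set"
  assumes diff: "\<And>a b. a \<in> A \<Longrightarrow> b \<in> A \<Longrightarrow> a - b \<in> A"
    and left: "\<And>a d. a \<in> A \<Longrightarrow> const_poly d * a \<in> A"
    and right: "\<And>a d. a \<in> A \<Longrightarrow> a * const_poly d \<in> A"
    and "q \<in> A"
  shows "q \<in> left_span {g \<in> A. center_coeffs g \<and> Poly_Mapping.keys g \<subseteq> Poly_Mapping.keys q}"
  using \<open>q \<in> A\<close>
proof (induction "card (Poly_Mapping.keys q)" arbitrary: q rule: less_induct)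
  case less
  define G where "G = {g \<in> A. center_coeffs g \<and> Poly_Mapping.keys g \<subseteq> Poly_Mapping.keys q}"
  have IH: "t \<in> left_span G" if "t \<in> A" "Poly_Mapping.keys t \<subset> Poly_Mapping.keys q" for t
  proof -
    have "card (Poly_Mapping.keys t) < card (Poly_Mapping.keys q)"
      using that(2) by (simp add: psubset_card_mono)
    from less.hyps[OF this that(1)] show ?thesis
      by (rule subsetD[OF left_span_mono, rotated]) (use that(2) in \<open>auto simp: G_def\<close>)
  qed
  show "q \<in> left_span G"
  proof (cases "q = 0")
    case True
    then show ?thesis
      by (simp add: zero_in_left_span)
  next
    case False
    then obtain m0 where m0: "m0 \<in> Poly_Mapping.keys q"
      by fastforce
    define c where "c = Poly_Mapping.lookup q m0"
    define q' where "q' = q * const_poly (inverse c)"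
    note q = right_normalize_coeff(1)[OF m0, folded c_def, folded q'_def]
      and keys_q' = right_normalize_coeff(2)[OF m0, folded c_def, folded q'_def]
      and q'_m0 = right_normalize_coeff(3)[OF m0, folded c_def, folded q'_def]
    have "q' \<in> A"
      using less.prems by (simp add: q'_def right)
    have "q' \<in> left_span G"
    proof (cases "center_coeffs q'")
      case True
      then show ?thesis
        using \<open>q' \<in> A\<close> keys_q' by (intro left_span_base) (simp add: G_def)
    next
      case False
      then obtain m1 x where non_central: "Poly_Mapping.lookup q' m1 * x \<noteq> x * Poly_Mapping.lookup q' m1"
        unfolding center_coeffs_def center_def by blast
      define s where "s = const_poly x * q' - q' * const_poly x"
      obtain e where "Poly_Mapping.keys s \<subset> Poly_Mapping.keys q'"
        and "Poly_Mapping.keys (q' - s * const_poly e) \<subset> Poly_Mapping.keys q'"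
        using keys_commutator_reduction[OF q'_m0 non_central] unfolding s_def by blast
      moreover have "s \<in> A" and "q' - s * const_poly e \<in> A"
        using \<open>q' \<in> A\<close> by (simp_all add: s_def diff left right)
      ultimately have "s \<in> left_span G" and "q' - s * const_poly e \<in> left_span G"
        using keys_q' by (simp_all add: IH)
      then have "(q' - s * const_poly e) + s * const_poly e \<in> left_span G"
        by (intro left_span_add left_span_mult_const_poly) (auto simp: G_def)
      then show ?thesis
        by simp
    qed
    then show ?thesis
      unfolding q by (rule left_span_mult_const_poly[rotated]) (simp add: G_def)
  qed
qed

lemma left_span_finite_generators:
  assumes "a \<in> left_span G"
  shows "\<exists>gs. set gs \<subseteq> G \<and> a \<in> left_span (set gs)"
proof -
  obtain L where "snd ` set L \<subseteq> G" and "a = (\<Sum>(d, g)\<leftarrow>L. const_poly d * g)"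
    using assms unfolding left_span_def by blast
  then show ?thesis
    unfolding left_span_def by (intro exI[of _ "map snd L"]) auto
qed

theorem lemma4p4:
  fixes n :: nat and p :: "('d::division_ring) mpoly"
  assumes "centrally_finite TYPE('d)"
    and "p \<in> poly_ring n"
  shows "\<exists>ps :: 'd mpoly list. (\<forall>q\<in>set ps. q \<in> poly_ring n \<and> center_coeffs q)
           \<and> adjoin {p} = adjoin (set ps)"
proof -
  have "p \<in> left_span {g \<in> adjoin {p}. center_coeffs g \<and> Poly_Mapping.keys g \<subseteq> Poly_Mapping.keys p}"
    by (rule left_span_center_coeffs) (auto intro: adjoin_diff adjoin.intros)
  then obtain ps where ps: "set ps \<subseteq> adjoin {p}" "p \<in> left_span (set ps)"
    and "\<forall>q\<in>set ps. center_coeffs q \<and> Poly_Mapping.keys q \<subseteq> Poly_Mapping.keys p"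
    by (blast dest: left_span_finite_generators)
  then have "\<forall>q\<in>set ps. q \<in> poly_ring n \<and> center_coeffs q"
    using assms(2) by (fastforce simp: poly_ring_def)
  moreover have "adjoin {p} \<subseteq> adjoin (set ps)"
    using ps(2) left_span_subset_adjoin by (intro adjoin_least) blast
  moreover have "adjoin (set ps) \<subseteq> adjoin {p}"
    using ps(1) by (rule adjoin_least)
  ultimately show ?thesis
    by blast
qed

end
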